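(* Let $k\ge1$ and let $Y$ be a random variable in $[0,1]^k$. Then for all $s>0$ and $r\ge0$, $$D^{(q)}(r\,|\,Y,\|\cdot\|_\infty,s)\le e^{-r/k}.$$ Moreover, if $Y_1\le\dots\le Y_k$ almost surely, the same bound holds when the infimum defining $D^{(q)}$ is restricted to codebooks $\mathcal C$ all of whose elements $\hat y$ satisfy $\hat y_1\le\dots\le\hat y_k$.
   Context: $D^{(q)}(r\,|\,Y,\|\cdot\|_\infty,s)=\inf\{(\mathbb E\min_{a\in\mathcal C}\|Y-a\|_\infty^s)^{1/s}:\mathcal C\subset\mathbb R^k\text{ finite},\ \log\#\mathcal C\le r\}$ (natural log). *)

theory Defs
  imports "HOL-Probability.Probability"
begin

text \<open>Points of R^k are represented as functions nat => real that vanish outside {..<k}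
  (coordinates 0..k-1 correspond to y_1..y_k).\<close>

definition vecs :: "nat \<Rightarrow> (nat \<Rightarrow> real) set" where
  "vecs k = {a. \<forall>i\<ge>k. a i = 0}"

definition sup_dist :: "nat \<Rightarrow> (nat \<Rightarrow> real) \<Rightarrow> (nat \<Rightarrow> real) \<Rightarrow> real" where
  "sup_dist k x a = Max ((\<lambda>i. \<bar>x i - a i\<bar>) ` {..<k})"

definition quant_err ::
  "'w measure \<Rightarrow> ('w \<Rightarrow> nat \<Rightarrow> real) \<Rightarrow> nat \<Rightarrow> real \<Rightarrow> (nat \<Rightarrow> real) set \<Rightarrow> real" where
  "quant_err M Y k s C =
     (integral\<^sup>L M (\<lambda>\<omega>. Min ((\<lambda>a. sup_dist k (Y \<omega>) a powr s) ` C))) powr (1 / s)"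

text \<open>Quantization distortion D^(q)(r | Y, ||.||_inf, s), with the infimum over finite
  nonempty codebooks C in R^k with ln #C <= r whose elements all satisfy P.
  The unrestricted D^(q) is the case P = (\<lambda>_. True).\<close>
definition Dq ::
  "'w measure \<Rightarrow> ('w \<Rightarrow> nat \<Rightarrow> real) \<Rightarrow> nat \<Rightarrow> real \<Rightarrow> real \<Rightarrow> ((nat \<Rightarrow> real) \<Rightarrow> bool) \<Rightarrow> real" where
  "Dq M Y k s r P = Inf {quant_err M Y k s C | C. finite C \<and> C \<noteq> {} \<and> C \<subseteq> vecs k
       \<and> (\<forall>a\<in>C. P a) \<and> ln (real (card C)) \<le> r}"

definition sorted_vec :: "nat \<Rightarrow> (nat \<Rightarrow> real) \<Rightarrow> bool" where
  "sorted_vec k a \<longleftrightarrow> (\<forall>i j. i \<le> j \<longrightarrow> j < k \<longrightarrow> a i \<le> a j)"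

end

theory Submission
  imports Defs
begin

text \<open>Round every coordinate of Y to the midpoint of its cell in the partition of [0,1] into
  m intervals of length 1/m. The resulting codebook has m^k points, which is at most e^r for
  m = \<lfloor>e^(r/k)\<rfloor>, and approximates Y within 1/(2m) \<le> e^(-r/k) in the sup norm, so
  the integrand of the quantization error is bounded by e^(-rs/k). Rounding is monotone,
  hence sorted vectors are rounded to sorted codewords.\<close>

lemma sup_dist_nonneg: "k \<ge> 1 \<Longrightarrow> 0 \<le> sup_dist k x a"
  unfolding sup_dist_def by (subst Max_ge_iff) (auto simp: lessThan_empty_iff intro!: exI[of _ 0])

text \<open>No measurability of Y is needed: a non-integrable integrand has Bochner integral 0.\<close>
lemma quant_err_le_if_AE_covered:
  assumes "prob_space M" "k \<ge> 1" "s > 0" "0 \<le> c" "finite C" "C \<noteq> {}"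
    and covered: "AE \<omega> in M. \<exists>a\<in>C. sup_dist k (Y \<omega>) a \<le> c"
  shows "quant_err M Y k s C \<le> c"
proof -
  interpret prob_space M by fact
  let ?f = "\<lambda>\<omega>. Min ((\<lambda>a. sup_dist k (Y \<omega>) a powr s) ` C)"
  have f_le: "AE \<omega> in M. ?f \<omega> \<le> c powr s"
    using covered
  proof eventually_elim
    case (elim \<omega>)
    then obtain a where a: "a \<in> C" "sup_dist k (Y \<omega>) a \<le> c" by blast
    have "?f \<omega> \<le> sup_dist k (Y \<omega>) a powr s" using a \<open>finite C\<close> by auto
    also have "\<dots> \<le> c powr s"
      using a \<open>s > 0\<close> sup_dist_nonneg[OF \<open>k \<ge> 1\<close>] by (intro powr_mono2) auto
    finally show ?case .
  qed
  have "integral\<^sup>L M ?f \<le> c powr s"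
  proof (cases "integrable M ?f")
    case True
    then have "integral\<^sup>L M ?f \<le> integral\<^sup>L M (\<lambda>_. c powr s)"
      using f_le by (intro integral_mono_AE) auto
    then show ?thesis by (simp add: prob_space)
  qed (simp add: not_integrable_integral_eq)
  moreover have "0 \<le> integral\<^sup>L M ?f"
    using \<open>finite C\<close> \<open>C \<noteq> {}\<close> by (intro integral_nonneg_AE) auto
  ultimately have "quant_err M Y k s C \<le> (c powr s) powr (1 / s)"
    unfolding quant_err_def using \<open>s > 0\<close> by (intro powr_mono2) auto
  also have "\<dots> = c" using \<open>s > 0\<close> \<open>0 \<le> c\<close> by (simp add: powr_powr)
  finally show ?thesis .
qed

lemma Dq_le_quant_err:
  assumes "finite C" "C \<noteq> {}" "C \<subseteq> vecs k" "\<forall>a\<in>C. P a" "ln (real (card C)) \<le> r"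
  shows "Dq M Y k s r P \<le> quant_err M Y k s C"
  unfolding Dq_def
  by (rule cInf_lower) (use assms in \<open>auto intro!: bdd_belowI[of _ 0] simp: quant_err_def\<close>)

definition cell_midpoints :: "nat \<Rightarrow> real set" where
  "cell_midpoints m = (\<lambda>j. (2 * real j + 1) / (2 * real m)) ` {..<m}"

text \<open>The index is clamped to m - 1 so that x = 1 lands in the last cell.\<close>
definition cell_midpoint :: "nat \<Rightarrow> real \<Rightarrow> real" where
  "cell_midpoint m x = (2 * real (min (m - 1) (nat \<lfloor>real m * x\<rfloor>)) + 1) / (2 * real m)"

lemma cell_midpoint_in_cell_midpoints: "m \<ge> 1 \<Longrightarrow> cell_midpoint m x \<in> cell_midpoints m"
  unfolding cell_midpoint_def cell_midpoints_def by (intro imageI) auto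

lemma mono_cell_midpoint: "mono (cell_midpoint m)"
proof
  fix x y :: real assume "x \<le> y"
  then have "nat \<lfloor>real m * x\<rfloor> \<le> nat \<lfloor>real m * y\<rfloor>"
    by (intro nat_mono floor_mono mult_left_mono) auto
  then show "cell_midpoint m x \<le> cell_midpoint m y"
    unfolding cell_midpoint_def by (intro divide_right_mono) auto
qed

lemma cell_midpoint_dist:
  assumes "m \<ge> 1" "0 \<le> x" "x \<le> 1"
  shows "\<bar>x - cell_midpoint m x\<bar> \<le> 1 / (2 * real m)"
proof -
  define j where "j = min (m - 1) (nat \<lfloor>real m * x\<rfloor>)"
  have mx: "0 \<le> real m * x" "real m * x \<le> real m"
    using assms by (auto simp: mult_left_le)
  have "real j \<le> real m * x \<and> real m * x \<le> real j + 1"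
  proof (cases "nat \<lfloor>real m * x\<rfloor> \<le> m - 1")
    case True
    then have "real j = of_int \<lfloor>real m * x\<rfloor>" using mx by (simp add: j_def)
    then show ?thesis by linarith
  next
    case False
    then have "j = m - 1" by (simp add: j_def)
    moreover have "real m * x \<ge> real m - 1" using False mx \<open>m \<ge> 1\<close> by linarith
    ultimately show ?thesis using mx \<open>m \<ge> 1\<close> by (simp add: of_nat_diff)
  qed
  then have "\<bar>2 * real m * x - (2 * real j + 1)\<bar> \<le> 1" by auto
  moreover have "x - cell_midpoint m x = (2 * real m * x - (2 * real j + 1)) / (2 * real m)"
    using \<open>m \<ge> 1\<close> unfolding cell_midpoint_def j_def[symmetric] by (simp add: field_simps)
  ultimately show ?thesis using \<open>m \<ge> 1\<close> by (simp add: abs_div divide_right_mono)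
qed

definition round_to_grid :: "nat \<Rightarrow> nat \<Rightarrow> (nat \<Rightarrow> real) \<Rightarrow> nat \<Rightarrow> real" where
  "round_to_grid k m y = (\<lambda>i. if i < k then cell_midpoint m (y i) else 0)"

definition grid_codebook :: "nat \<Rightarrow> nat \<Rightarrow> (nat \<Rightarrow> real) set" where
  "grid_codebook k m = {a \<in> vecs k. \<forall>i<k. a i \<in> cell_midpoints m}"

lemma round_to_grid_in_grid_codebook: "m \<ge> 1 \<Longrightarrow> round_to_grid k m y \<in> grid_codebook k m"
  using cell_midpoint_in_cell_midpoints
  by (auto simp: round_to_grid_def grid_codebook_def vecs_def)

lemma sup_dist_round_to_grid:
  assumes "k \<ge> 1" "m \<ge> 1" "\<forall>i<k. y i \<in> {0..1}"
  shows "sup_dist k y (round_to_grid k m y) \<le> 1 / (2 * real m)"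
  unfolding sup_dist_def using assms cell_midpoint_dist
  by (subst Max_le_iff) (auto simp: round_to_grid_def lessThan_empty_iff)

lemma sorted_vec_round_to_grid: "sorted_vec k y \<Longrightarrow> sorted_vec k (round_to_grid k m y)"
  using mono_cell_midpoint by (auto simp: sorted_vec_def round_to_grid_def mono_def)

lemma finite_grid_codebook_card_le:
  "finite (grid_codebook k m) \<and> card (grid_codebook k m) \<le> m ^ k"
proof -
  let ?ext = "\<lambda>f i. if i < k then f i else 0"
  have sub: "grid_codebook k m \<subseteq> ?ext ` PiE {..<k} (\<lambda>_. cell_midpoints m)"
  proof
    fix a assume a: "a \<in> grid_codebook k m"
    then have "a = ?ext (restrict a {..<k})" by (auto simp: grid_codebook_def vecs_def)
    moreover have "restrict a {..<k} \<in> PiE {..<k} (\<lambda>_. cell_midpoints m)"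
      using a by (auto simp: grid_codebook_def)
    ultimately show "a \<in> ?ext ` PiE {..<k} (\<lambda>_. cell_midpoints m)" by (rule image_eqI)
  qed
  have fin: "finite (PiE {..<k} (\<lambda>_. cell_midpoints m))"
    by (simp add: finite_PiE cell_midpoints_def)
  have "card (grid_codebook k m) \<le> card (?ext ` PiE {..<k} (\<lambda>_. cell_midpoints m))"
    using fin by (intro card_mono[OF _ sub]) auto
  also have "\<dots> \<le> card (PiE {..<k} (\<lambda>_. cell_midpoints m))"
    using fin by (rule card_image_le)
  also have "\<dots> = card (cell_midpoints m) ^ k" by (simp add: card_PiE)
  also have "\<dots> \<le> m ^ k"
    unfolding cell_midpoints_def by (intro power_mono) (auto intro: card_image_le[THEN order_trans])
  finally show ?thesis using fin sub finite_subset by blast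
qed

lemma Dq_le_grid_resolution:
  assumes "prob_space M" "k \<ge> 1" "s > 0" "m \<ge> 1" "real m ^ k \<le> exp r"
    and AE_rounded: "AE \<omega> in M. (\<forall>i<k. Y \<omega> i \<in> {0..1}) \<and> P (round_to_grid k m (Y \<omega>))"
  shows "Dq M Y k s r P \<le> 1 / (2 * real m)"
proof -
  interpret prob_space M by fact
  define C where "C = {a \<in> grid_codebook k m. P a}"
  have "C \<subseteq> grid_codebook k m" by (auto simp: C_def)
  then have "finite C" "card C \<le> m ^ k"
    using finite_grid_codebook_card_le[of k m] by (auto intro: finite_subset card_mono order_trans)
  obtain \<omega> where "P (round_to_grid k m (Y \<omega>))"
    using eventually_happens[OF AE_rounded] ae_filter_bot by blast
  then have "C \<noteq> {}"
    using round_to_grid_in_grid_codebook[OF \<open>m \<ge> 1\<close>] unfolding C_def by blast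
  have "real (card C) \<le> exp r"
    using \<open>card C \<le> m ^ k\<close> \<open>real m ^ k \<le> exp r\<close> by (metis of_nat_le_iff of_nat_power order_trans)
  then have "ln (real (card C)) \<le> ln (exp r)"
    using \<open>finite C\<close> \<open>C \<noteq> {}\<close> by (intro ln_mono) (auto simp: card_gt_0_iff)
  then have "ln (real (card C)) \<le> r" by simp
  then have "Dq M Y k s r P \<le> quant_err M Y k s C"
    using \<open>finite C\<close> \<open>C \<noteq> {}\<close> by (intro Dq_le_quant_err) (auto simp: C_def grid_codebook_def)
  also have "\<dots> \<le> 1 / (2 * real m)"
  proof (rule quant_err_le_if_AE_covered[OF assms(1-3) _ \<open>finite C\<close> \<open>C \<noteq> {}\<close>])
    show "AE \<omega> in M. \<exists>a\<in>C. sup_dist k (Y \<omega>) a \<le> 1 / (2 * real m)"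
      using AE_rounded
    proof eventually_elim
      case (elim \<omega>)
      then show ?case
        using round_to_grid_in_grid_codebook[OF \<open>m \<ge> 1\<close>]
          sup_dist_round_to_grid[OF \<open>k \<ge> 1\<close> \<open>m \<ge> 1\<close>] unfolding C_def by blast
    qed
  qed simp
  finally show ?thesis .
qed

theorem lemma3:
  fixes M :: "'w measure" and Y :: "'w \<Rightarrow> nat \<Rightarrow> real" and k :: nat and s r :: real
  assumes "prob_space M"
    and "k \<ge> 1"
    and "\<And>i. i < k \<Longrightarrow> (\<lambda>\<omega>. Y \<omega> i) \<in> borel_measurable M"
    and "\<And>\<omega> i. \<omega> \<in> space M \<Longrightarrow> i < k \<Longrightarrow> Y \<omega> i \<in> {0..1}"
    and "s > 0" and "r \<ge> 0"
  shows "Dq M Y k s r (\<lambda>_. True) \<le> exp (- r / real k)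
     \<and> ((AE \<omega> in M. sorted_vec k (Y \<omega>)) \<longrightarrow> Dq M Y k s r (sorted_vec k) \<le> exp (- r / real k))"
proof -
  have AE_unit_cube: "AE \<omega> in M. \<forall>i<k. Y \<omega> i \<in> {0..1}"
    using assms(4) by (intro AE_I2) auto
  define m where "m = nat \<lfloor>exp (r / real k)\<rfloor>"
  have "exp (r / real k) \<ge> 1" using assms(2,6) by simp
  then have "m \<ge> 1" "real m \<le> exp (r / real k)" "exp (r / real k) < real m + 1"
    unfolding m_def by linarith+
  have "real m ^ k \<le> exp (r / real k) ^ k"
    using \<open>real m \<le> exp (r / real k)\<close> by (intro power_mono) auto
  also have "\<dots> = exp r" using assms(2) by (simp flip: exp_of_nat_mult)
  finally have grid_size: "real m ^ k \<le> exp r" .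
  have "1 / (2 * real m) \<le> 1 / exp (r / real k)"
    using \<open>m \<ge> 1\<close> \<open>exp (r / real k) < real m + 1\<close> by (intro divide_left_mono) auto
  then have resolution: "1 / (2 * real m) \<le> exp (- r / real k)" by (simp add: exp_minus inverse_eq_divide)
  have "Dq M Y k s r (\<lambda>_. True) \<le> 1 / (2 * real m)"
    using AE_unit_cube by (intro Dq_le_grid_resolution[OF assms(1,2,5) \<open>m \<ge> 1\<close> grid_size]) auto
  moreover have "Dq M Y k s r (sorted_vec k) \<le> 1 / (2 * real m)"
    if "AE \<omega> in M. sorted_vec k (Y \<omega>)"
    using that AE_unit_cube sorted_vec_round_to_grid
    by (intro Dq_le_grid_resolution[OF assms(1,2,5) \<open>m \<ge> 1\<close> grid_size]) auto
  ultimately show ?thesis using resolution by auto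
qed

end
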